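(* Every series $P\in\mathcal R^+$ is congruent modulo $\mathfrak I_0$ to the characteristic series $S_X$ of some $X\in\mathbb W$. Consequently every $S\in\mathcal R$ can be written as $S=S_X-S_Y+S_0$ for suitable $X,Y\in\mathbb W$ and $S_0\in\mathfrak I_0$.
   Context: Let $\mathbb N=\{0,1,2,\dots\}$. $\mathbb{W}$ is the family of finitary point sets: sets $A\subseteq\bigcup_{k\ge1}\mathbb N^k$ of finite tuples of natural numbers such that for every $n\in\mathbb N$ there is $h$ with $A\cap\{0,\dots,n\}^k=\emptyset$ for all $k>h$. Let $t_0,t_1,\dots$ be countably many indeterminates; let $\mathbf A$ be the set of eventually zero sequences $\mathbf a=(a_0,a_1,\dots)$ of non-negative integers, and $t^{\mathbf a}=\prod_i t_i^{a_i}$. Formal series are $S=\sum_{\mathbf a\in\mathbf A}n_{\mathbf a}t^{\mathbf a}$ with $n_{\mathbf a}\in\mathbb Z$. $\mathcal R$ is the ring of those formal series $S$ for which there exist $d_n\in\mathbb N$ $(n\in\mathbb N)$ with $n_{\mathbf a}=0$ whenever $a_n>d_n$ for some $n$ (bounded degree $d_n$ in each variable $t_n$), and some $b\in\mathbb N$ with $|n_{\mathbf a}|\le b\,(\sum_i a_i)!/\prod_i a_i!$ for all $\mathbf a$. $\mathcal R^+$ is the set of nonzero series of $\mathcal R$ all of whose coefficients are non-negative (positive series). $\mathfrak I_0$ is the ideal of $\mathcal R$ generated by $\{t_n-1:n\in\mathbb N\}$. For a tuple $x=(x_1,\dots,x_d)$ let $t_x=t^{\mathbf a}$ where $a_i=|\{j:x_j=i\}|$.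 The characteristic series of $X\in\mathbb W$ is $S_X=\sum_{x\in X}t_x$ (the coefficient of $t^{\mathbf a}$ is the number of $x\in X$ with $t_x=t^{\mathbf a}$), with $S_\emptyset=0$. *)

theory Defs
  imports Main "HOL-Library.Poly_Mapping"
begin

text \<open>Exponent vectors (eventually zero sequences) are finitely supported maps
  nat to nat with finite support; a formal series assigns an integer coefficient to each of them.\<close>

type_synonym expo = "nat \<Rightarrow>\<^sub>0 nat"
type_synonym series = "expo \<Rightarrow> int"

definition finitary :: "nat list set \<Rightarrow> bool" where
  "finitary A \<longleftrightarrow> (\<forall>x\<in>A. x \<noteq> []) \<and>
     (\<forall>n. \<exists>h. \<forall>x\<in>A. set x \<subseteq> {0..n} \<longrightarrow> length x \<le> h)"

definition W :: "nat list set set" where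
  "W = {A. finitary A}"

definition total_deg :: "expo \<Rightarrow> nat" where
  "total_deg a = (\<Sum>i\<in>Poly_Mapping.keys a. Poly_Mapping.lookup a i)"

definition multinom :: "expo \<Rightarrow> nat" where
  "multinom a = fact (total_deg a) div (\<Prod>i\<in>Poly_Mapping.keys a. fact (Poly_Mapping.lookup a i))"

definition R :: "series set" where
  "R = {S. (\<exists>d::nat \<Rightarrow> nat. \<forall>a. (\<exists>n. Poly_Mapping.lookup a n > d n) \<longrightarrow> S a = 0) \<and>
           (\<exists>b::nat. \<forall>a. \<bar>S a\<bar> \<le> int b * int (multinom a))}"

definition Rplus :: "series set" where
  "Rplus = {S \<in> R. S \<noteq> (\<lambda>_. 0) \<and> (\<forall>a. S a \<ge> 0)}"

definition series_mult :: "series \<Rightarrow> series \<Rightarrow> series" where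
  "series_mult S T = (\<lambda>a. \<Sum>(b, c) \<in> {(b, c). b + c = a}. S b * T c)"

definition tm1 :: "nat \<Rightarrow> series" where
  "tm1 n = (\<lambda>a. if a = Poly_Mapping.single n 1 then 1 else if a = 0 then -1 else 0)"

definition I0 :: "series set" where
  "I0 = {S. \<exists>(N::nat) (r :: nat \<Rightarrow> series) (m :: nat \<Rightarrow> nat).
             (\<forall>j<N. r j \<in> R) \<and> S = (\<lambda>a. \<Sum>j<N. series_mult (r j) (tm1 (m j)) a)}"

definition tx :: "nat list \<Rightarrow> expo" where
  "tx x = Abs_poly_mapping (\<lambda>i. count_list x i)"

definition charser :: "nat list set \<Rightarrow> series" where
  "charser X = (\<lambda>a. int (card {x \<in> X. tx x = a}))"

end

theory Submission
  imports Defs "HOL-Combinatorics.Multiset_Permutations"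
begin

text \<open>Multiplying a series P by a monomial t^c does not change its class modulo \<open>I0\<close>,
  since t^c - 1 lies in \<open>I0\<close>. The coefficient bound of \<open>R\<close> says that P(a) is at most B times
  the number of words of type a, i.e. of tuples x with t_x = t^a. Taking c the type of (01)^k with 2^k \<ge> B, the number of
  words of type a + c is at least 2^k times that of type a, so the shifted series t^c P is
  pointwise below the number of words of each type, and a set X realising it as \<open>charser X\<close>
  can be chosen word type by word type. Since P has bounded degree in each variable and every
  word of X contains the letter 0, X is finitary. The second claim follows by splitting S
  into its positive and negative parts.\<close>

lemma lookup_tx: "Poly_Mapping.lookup (tx x) = count_list x"
proof -
  have "{i. count_list x i \<noteq> 0} \<subseteq> set x" by (auto simp: count_list_0_iff)
  hence "finite {i. count_list x i \<noteq> 0}" by (rule finite_subset) simp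
  thus ?thesis unfolding tx_def by simp
qed

lemma tx_Nil: "tx [] = 0"
  by (rule poly_mapping_eqI) (simp add: lookup_tx)

lemma tx_append: "tx (x @ y) = tx x + tx y"
  by (rule poly_mapping_eqI) (simp add: lookup_tx lookup_add)

lemma tx_single: "tx [i] = Poly_Mapping.single i 1"
  by (rule poly_mapping_eqI) (simp add: lookup_tx lookup_single when_def)

lemma tx_swap: "tx [i, j] = tx [j, i]"
  by (rule poly_mapping_eqI) (simp add: lookup_tx)


section \<open>Words of a given type\<close>

definition words :: "expo \<Rightarrow> nat list set" where
  "words a = {x. tx x = a}"

definition mset_of_expo :: "expo \<Rightarrow> nat multiset" where
  "mset_of_expo a = Abs_multiset (Poly_Mapping.lookup a)"

lemma count_mset_of_expo: "count (mset_of_expo a) = Poly_Mapping.lookup a"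
proof -
  have "{x. Poly_Mapping.lookup a x > 0} = Poly_Mapping.keys a" by (auto simp: in_keys_iff)
  thus ?thesis unfolding mset_of_expo_def by (simp add: count_Abs_multiset)
qed

lemma set_mset_of_expo: "set_mset (mset_of_expo a) = Poly_Mapping.keys a"
  by (auto simp: set_mset_def count_mset_of_expo in_keys_iff)

lemma tx_eq_iff_mset: "tx x = a \<longleftrightarrow> mset x = mset_of_expo a"
proof -
  have "tx x = a \<longleftrightarrow> (\<forall>k. count_list x k = Poly_Mapping.lookup a k)"
    by (auto simp: poly_mapping_eq_iff lookup_tx)
  also have "\<dots> \<longleftrightarrow> mset x = mset_of_expo a"
    by (auto simp: multiset_eq_iff count_mset count_mset_of_expo)
  finally show ?thesis .
qed

lemma words_eq_permutations_of_multiset: "words a = permutations_of_multiset (mset_of_expo a)"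
  by (auto simp: words_def permutations_of_multiset_def tx_eq_iff_mset)

lemma finite_words [simp]: "finite (words a)"
  by (simp add: words_eq_permutations_of_multiset)

lemma ex_tx_eq: "\<exists>y. tx y = a"
  using ex_mset[of "mset_of_expo a"] by (auto simp: tx_eq_iff_mset)

lemma multinom_eq_card_words: "multinom a = card (words a)"
proof -
  have "size (mset_of_expo a) = total_deg a"
    by (simp add: size_multiset_overloaded_eq set_mset_of_expo count_mset_of_expo total_deg_def)
  thus ?thesis
    by (simp add: words_eq_permutations_of_multiset card_permutations_of_multiset(1)
        multinom_def set_mset_of_expo count_mset_of_expo)
qed

lemma card_words_mono: "card (words b) \<le> card (words (b + c))"
proof -
  obtain y where y: "tx y = c" using ex_tx_eq by blast
  have "inj_on (\<lambda>x. x @ y) (words b)" by (auto simp: inj_on_def)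
  moreover have "(\<lambda>x. x @ y) ` words b \<subseteq> words (b + c)"
    by (auto simp: words_def tx_append y)
  ultimately show ?thesis by (simp add: card_inj_on_le)
qed

lemma multinom_mono: "multinom b \<le> multinom (b + c)"
  by (simp add: multinom_eq_card_words card_words_mono)

lemma card_words_double:
  assumes "i \<noteq> j"
  shows "2 * card (words a) \<le> card (words (tx [i, j] + a))"
proof -
  let ?f = "\<lambda>x. [i, j] @ x" and ?g = "\<lambda>x. [j, i] @ x"
  have "card (?f ` words a) = card (words a)" "card (?g ` words a) = card (words a)"
    by (auto intro: card_image simp: inj_on_def)
  moreover have "?f ` words a \<inter> ?g ` words a = {}" using assms by auto
  ultimately have "2 * card (words a) = card (?f ` words a \<union> ?g ` words a)"
    by (simp add: card_Un_disjoint)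
  also have "\<dots> \<le> card (words (tx [i, j] + a))"
  proof (rule card_mono)
    show "?f ` words a \<union> ?g ` words a \<subseteq> words (tx [i, j] + a)"
      using tx_swap[of i j] by (auto simp: words_def tx_append simp del: append_Cons)
  qed simp
  finally show ?thesis .
qed

lemma card_words_pow:
  assumes "i \<noteq> j"
  shows "2 ^ k * card (words a) \<le> card (words (a + tx (concat (replicate k [i, j]))))"
proof (induction k)
  case 0 thus ?case by (simp add: tx_Nil)
next
  case (Suc k)
  let ?c = "tx (concat (replicate k [i, j]))"
  have "2 ^ Suc k * card (words a) \<le> 2 * card (words (a + ?c))"
    using Suc by simp
  also have "\<dots> \<le> card (words (tx [i, j] + (a + ?c)))"
    using assms by (rule card_words_double)
  also have "tx [i, j] + (a + ?c) = a + tx (concat (replicate (Suc k) [i, j]))"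
    by (simp add: tx_append[symmetric] add_ac)
  finally show ?case .
qed


lemma lookup_le_total_deg: "Poly_Mapping.lookup a k \<le> total_deg a"
proof (cases "k \<in> Poly_Mapping.keys a")
  case True
  thus ?thesis unfolding total_deg_def by (intro member_le_sum) auto
qed (simp add: in_keys_iff)

lemma finite_expo_le: "finite {b::expo. \<forall>k. Poly_Mapping.lookup b k \<le> Poly_Mapping.lookup a k}"
proof -
  let ?A = "{b::expo. \<forall>k. Poly_Mapping.lookup b k \<le> Poly_Mapping.lookup a k}"
  let ?F = "{f. \<forall>k. (k \<in> Poly_Mapping.keys a \<longrightarrow> f k \<in> {..total_deg a})
                   \<and> (k \<notin> Poly_Mapping.keys a \<longrightarrow> f k = 0)}"
  have "Poly_Mapping.lookup b \<in> ?F" if b: "b \<in> ?A" for b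
  proof -
    have le: "Poly_Mapping.lookup b k \<le> Poly_Mapping.lookup a k" for k using b by simp
    hence "Poly_Mapping.lookup b k \<le> total_deg a" for k
      using lookup_le_total_deg order_trans by blast
    moreover have "Poly_Mapping.lookup b k = 0" if "k \<notin> Poly_Mapping.keys a" for k
      using le[of k] that by (simp add: in_keys_iff)
    ultimately show ?thesis by blast
  qed
  hence "Poly_Mapping.lookup ` ?A \<subseteq> ?F" by (rule image_subsetI)
  moreover have "finite ?F" by (intro finite_set_of_finite_funs) auto
  ultimately have "finite (Poly_Mapping.lookup ` ?A)" by (rule finite_subset)
  thus ?thesis by (rule finite_imageD) (simp add: inj_on_def)
qed

lemma finite_decompositions: "finite {(b, c). b + c = (a::expo)}"
proof -
  have "{(b, c). b + c = a} \<subseteq>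
        (\<lambda>b. (b, a - b)) ` {b. \<forall>k. Poly_Mapping.lookup b k \<le> Poly_Mapping.lookup a k}"
    by (auto simp: lookup_add intro!: image_eqI)
  thus ?thesis by (rule finite_surj[OF finite_expo_le])
qed


section \<open>Multiplication by a monomial\<close>

definition shift :: "expo \<Rightarrow> series \<Rightarrow> series" where
  "shift c P = (\<lambda>a. if \<exists>b. a = b + c then P (a - c) else 0)"

lemma shift_add_expo [simp]: "shift c P (b + c) = P b"
  by (auto simp: shift_def)

lemma shift_eq_0: "\<nexists>b. a = b + c \<Longrightarrow> shift c P a = 0"
  by (simp add: shift_def)

lemma shift_nonzeroE:
  assumes "shift c P a \<noteq> 0"
  obtains b where "a = b + c" "P b \<noteq> 0"
  using assms unfolding shift_def by (metis add_diff_cancel_right')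

lemma shift_0: "shift 0 P = P"
  by (simp add: shift_def fun_eq_iff)

lemma shift_shift: "shift e (shift c P) = shift (c + e) P"
proof
  fix a
  show "shift e (shift c P) a = shift (c + e) P a"
  proof (cases "\<exists>b. a = b + (c + e)")
    case True
    then obtain b where a: "a = (b + c) + e" by (metis add.assoc)
    have "shift (c + e) P ((b + c) + e) = P b" by (metis add.assoc shift_add_expo)
    thus ?thesis by (simp add: a)
  next
    case False
    hence "shift c P (a - e) = 0" if "a = a' + e" for a'
      using that by (auto intro!: shift_eq_0 simp: add.assoc)
    thus ?thesis using False by (auto simp: shift_def)
  qed
qed

lemma series_mult_tm1: "series_mult r (tm1 i) = (\<lambda>a. shift (Poly_Mapping.single i 1) r a - r a)"
proof
  fix a :: expo
  let ?e = "Poly_Mapping.single i (1::nat)"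
  let ?S = "{(b, c). b + c = a}"
  let ?f = "\<lambda>(b, c). r b * tm1 i c"
  let ?T = "{(a, 0)} \<union> (if \<exists>b. a = b + ?e then {(a - ?e, ?e)} else {})"
  have e0: "?e \<noteq> 0" by (metis lookup_single_eq lookup_zero zero_neq_one)
  have "sum ?f ?S = sum ?f ?T"
  proof (rule sum.mono_neutral_right)
    show "finite ?S" by (rule finite_decompositions)
    show "?T \<subseteq> ?S" by auto
    show "\<forall>p\<in>?S - ?T. ?f p = 0"
    proof
      fix p assume p: "p \<in> ?S - ?T"
      then obtain b c where "p = (b, c)" "b + c = a" by auto
      moreover have "c \<noteq> 0" "c \<noteq> ?e" using p calculation by auto
      ultimately show "?f p = 0" by (simp add: tm1_def)
    qed
  qed
  also have "\<dots> = shift ?e r a - r a"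
    using e0 by (cases "\<exists>b. a = b + ?e") (auto simp: shift_def tm1_def)
  finally show "series_mult r (tm1 i) a = shift ?e r a - r a" by (simp add: series_mult_def)
qed


lemma RI:
  assumes "\<And>a n. Poly_Mapping.lookup a n > d n \<Longrightarrow> S a = 0"
    and "\<And>a. \<bar>S a\<bar> \<le> int B * int (multinom a)"
  shows "S \<in> R"
  unfolding R_def using assms by blast

lemma RE:
  assumes "S \<in> R"
  obtains d :: "nat \<Rightarrow> nat" and B :: nat where "\<And>a n. Poly_Mapping.lookup a n > d n \<Longrightarrow> S a = 0"
    and "\<And>a. \<bar>S a\<bar> \<le> int B * int (multinom a)"
  using assms unfolding R_def by blast

lemma I0I:
  fixes N :: nat
  assumes "\<forall>j<N. r j \<in> R" "S = (\<lambda>a. \<Sum>j<N. series_mult (r j) (tm1 (m j)) a)"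
  shows "S \<in> I0"
  unfolding I0_def using assms by blast

lemma I0E:
  assumes "S \<in> I0"
  obtains N :: nat and r m where "\<forall>j<N. r j \<in> R" "S = (\<lambda>a. \<Sum>j<N. series_mult (r j) (tm1 (m j)) a)"
  using assms unfolding I0_def by blast

lemma R_uminus: "S \<in> R \<Longrightarrow> (\<lambda>a. - S a) \<in> R"
  unfolding R_def mem_Collect_eq by auto

lemma R_pos_part:
  assumes "S \<in> R"
  shows "(\<lambda>a. max (S a) 0) \<in> R"
proof -
  obtain d B where d: "\<And>a n. Poly_Mapping.lookup a n > d n \<Longrightarrow> S a = 0"
    and B: "\<And>a. \<bar>S a\<bar> \<le> int B * int (multinom a)"
    using RE[OF assms] by metis
  show ?thesis
  proof (rule RI)
    fix a n assume "Poly_Mapping.lookup a n > d n"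
    thus "max (S a) 0 = 0" using d by simp
  next
    fix a show "\<bar>max (S a) 0\<bar> \<le> int B * int (multinom a)" using B[of a] by linarith
  qed
qed

lemma R_shift:
  assumes "P \<in> R"
  shows "shift c P \<in> R"
proof -
  obtain d B where d: "\<And>a n. Poly_Mapping.lookup a n > d n \<Longrightarrow> P a = 0"
    and B: "\<And>a. \<bar>P a\<bar> \<le> int B * int (multinom a)"
    using RE[OF assms] by metis
  have "shift c P a = 0" if "Poly_Mapping.lookup a n > d n + Poly_Mapping.lookup c n" for a n
  proof (rule ccontr)
    assume "shift c P a \<noteq> 0"
    then obtain b where "a = b + c" "P b \<noteq> 0" by (rule shift_nonzeroE)
    thus False using that d[of n b] by (simp add: lookup_add)
  qed
  moreover have "\<bar>shift c P a\<bar> \<le> int B * int (multinom a)" for a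
  proof (cases "\<exists>b. a = b + c")
    case True
    then obtain b where b: "a = b + c" by blast
    have "\<bar>P b\<bar> \<le> int B * int (multinom b)" by (rule B)
    also have "\<dots> \<le> int B * int (multinom a)"
      using multinom_mono[of b c] b by (simp add: mult_left_mono)
    finally show ?thesis using b by simp
  qed (simp add: shift_eq_0)
  ultimately show ?thesis by (rule RI)
qed

lemma I0_zero: "(\<lambda>a. 0) \<in> I0"
  by (rule I0I[where N=0]) simp_all

lemma I0_mult_tm1: "r \<in> R \<Longrightarrow> series_mult r (tm1 i) \<in> I0"
  by (rule I0I[where N=1 and r="\<lambda>_. r" and m="\<lambda>_. i"]) simp_all

lemma series_mult_uminus_left: "series_mult (\<lambda>a. - r a) t = (\<lambda>a. - series_mult r t a)"
  unfolding series_mult_def by (simp add: case_prod_beta sum_negf)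

lemma I0_uminus:
  assumes "S \<in> I0"
  shows "(\<lambda>a. - S a) \<in> I0"
proof -
  obtain N :: nat and r m where r: "\<forall>j<N. r j \<in> R"
    and S: "S = (\<lambda>a. \<Sum>j<N. series_mult (r j) (tm1 (m j)) a)"
    using assms by (rule I0E)
  have "\<forall>j<N. (\<lambda>a. - r j a) \<in> R" using r R_uminus by blast
  moreover have "(\<lambda>a. - S a) = (\<lambda>a. \<Sum>j<N. series_mult (\<lambda>a. - r j a) (tm1 (m j)) a)"
    using S by (simp add: series_mult_uminus_left sum_negf)
  ultimately show ?thesis by (rule I0I)
qed

lemma sum_lessThan_add_split:
  "(\<Sum>j<M + N. f j) = (\<Sum>j<M. f j) + (\<Sum>j<N. f (M + (j::nat)))"
  by (induction N) (simp_all add: add_ac)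

lemma I0_add:
  assumes "S \<in> I0" "T \<in> I0"
  shows "(\<lambda>a. S a + T a) \<in> I0"
proof -
  obtain M :: nat and r m where r: "\<forall>j<M. r j \<in> R"
    and S: "S = (\<lambda>a. \<Sum>j<M. series_mult (r j) (tm1 (m j)) a)"
    using assms(1) by (rule I0E)
  obtain N :: nat and s n where s: "\<forall>j<N. s j \<in> R"
    and T: "T = (\<lambda>a. \<Sum>j<N. series_mult (s j) (tm1 (n j)) a)"
    using assms(2) by (rule I0E)
  let ?r = "\<lambda>j. if j < M then r j else s (j - M)"
  let ?m = "\<lambda>j. if j < M then m j else n (j - M)"
  have "\<forall>j<M + N. ?r j \<in> R" using r s by auto
  moreover have "(\<lambda>a. S a + T a) = (\<lambda>a. \<Sum>j<M + N. series_mult (?r j) (tm1 (?m j)) a)"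
    unfolding S T sum_lessThan_add_split by simp
  ultimately show ?thesis by (rule I0I)
qed

lemma shift_congruent_I0: "P \<in> R \<Longrightarrow> (\<lambda>a. P a - shift (tx xs) P a) \<in> I0"
proof (induction xs rule: rev_induct)
  case Nil
  thus ?case using I0_zero by (simp add: tx_Nil shift_0)
next
  case (snoc i xs)
  let ?Q = "shift (tx xs) P" and ?e = "Poly_Mapping.single i (1::nat)"
  have "?Q \<in> R" using snoc.prems by (rule R_shift)
  hence "(\<lambda>a. - series_mult ?Q (tm1 i) a) \<in> I0" by (intro I0_uminus I0_mult_tm1)
  hence "(\<lambda>a. ?Q a - shift ?e ?Q a) \<in> I0" by (simp add: series_mult_tm1)
  hence "(\<lambda>a. (P a - ?Q a) + (?Q a - shift ?e ?Q a)) \<in> I0" using I0_add snoc by blast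
  moreover have "shift ?e ?Q = shift (tx (xs @ [i])) P" by (simp add: tx_append tx_single shift_shift)
  ultimately show ?case by simp
qed


section \<open>Realising a series by a set of words\<close>

lemma charser_realises:
  assumes "\<And>a. 0 \<le> Q a" "\<And>a. nat (Q a) \<le> card (words a)"
  obtains X where "charser X = Q" "\<And>x. x \<in> X \<Longrightarrow> Q (tx x) \<noteq> 0"
proof -
  have "\<forall>a. \<exists>Y. Y \<subseteq> words a \<and> card Y = nat (Q a)"
    using obtain_subset_with_card_n[OF assms(2)] by metis
  then obtain Y where Y: "\<forall>a. Y a \<subseteq> words a \<and> card (Y a) = nat (Q a)"
    by (rule choice[THEN exE])
  define X where "X = (\<Union>a. Y a)"
  have XY: "{x \<in> X. tx x = a} = Y a" for a
    using Y by (auto simp: X_def words_def)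
  show thesis
  proof
    show "charser X = Q" using assms(1) Y by (simp add: charser_def XY fun_eq_iff)
  next
    fix x assume "x \<in> X"
    then obtain a where x: "x \<in> Y a" by (auto simp: X_def)
    have Ya: "Y a \<subseteq> words a" "card (Y a) = nat (Q a)" using Y by simp_all
    hence "tx x = a" using x by (auto simp: words_def)
    moreover have "card (Y a) \<noteq> 0" using x Ya(1) by (auto simp: card_eq_0_iff finite_subset)
    ultimately show "Q (tx x) \<noteq> 0" using Ya(2) by simp
  qed
qed

lemma finitary_if_counts_bounded:
  assumes "\<And>x. x \<in> X \<Longrightarrow> x \<noteq> []" "\<And>x i. x \<in> X \<Longrightarrow> count_list x i \<le> e i"
  shows "finitary X"
  unfolding finitary_def
proof (intro conjI allI)
  show "\<forall>x\<in>X. x \<noteq> []" using assms(1) by blast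
  fix n
  have "length x \<le> (\<Sum>i\<in>{0..n}. e i)" if "x \<in> X" "set x \<subseteq> {0..n}" for x
  proof -
    have "length x = (\<Sum>i\<in>{0..n}. count_list x i)" using that(2) by (simp add: sum_count_set)
    also have "\<dots> \<le> (\<Sum>i\<in>{0..n}. e i)" using assms(2)[OF that(1)] by (rule sum_mono)
    finally show ?thesis .
  qed
  thus "\<exists>h. \<forall>x\<in>X. set x \<subseteq> {0..n} \<longrightarrow> length x \<le> h" by blast
qed

lemma shift_le_card_words:
  assumes B: "\<And>b. \<bar>P b\<bar> \<le> int B * int (multinom b)" and "B \<le> 2 ^ k" "i \<noteq> j"
  shows "shift (tx (concat (replicate k [i, j]))) P a \<le> int (card (words a))"
proof (cases "\<exists>b. a = b + tx (concat (replicate k [i, j]))")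
  case True
  then obtain b where b: "a = b + tx (concat (replicate k [i, j]))" by blast
  have "P b \<le> int B * int (card (words b))" using B[of b] by (simp add: multinom_eq_card_words)
  also have "\<dots> \<le> int (2 ^ k * card (words b))"
    unfolding of_nat_mult[symmetric] of_nat_le_iff using assms(2) by (rule mult_le_mono1)
  also have "\<dots> \<le> int (card (words a))"
    unfolding b of_nat_le_iff by (rule card_words_pow[OF assms(3)])
  finally show ?thesis using b by simp
qed (simp add: shift_eq_0)


lemma nonneg_series_congruent_charser:
  assumes "P \<in> R" and nonneg: "\<And>a. 0 \<le> P a"
  shows "\<exists>X\<in>W. (\<lambda>a. P a - charser X a) \<in> I0"
proof -
  obtain d B where d: "\<And>a n. Poly_Mapping.lookup a n > d n \<Longrightarrow> P a = 0"
    and B: "\<And>a. \<bar>P a\<bar> \<le> int B * int (multinom a)"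
    using RE[OF assms(1)] by metis
  define cs where "cs = concat (replicate (Suc B) [0::nat, 1])"
  define Q where "Q = shift (tx cs) P"
  have "0 \<le> Q a" for a using nonneg by (simp add: Q_def shift_def)
  moreover have "B \<le> 2 ^ Suc B" using less_exp[of "Suc B"] by simp
  hence "nat (Q a) \<le> card (words a)" for a
    using shift_le_card_words[OF B, of "Suc B" 0 1 a] by (simp add: Q_def cs_def)
  ultimately obtain X where X: "charser X = Q" "\<And>x. x \<in> X \<Longrightarrow> Q (tx x) \<noteq> 0"
    by (rule charser_realises) blast
  have "x \<noteq> [] \<and> count_list x i \<le> d i + count_list cs i" if x: "x \<in> X" for x i
  proof -
    obtain b where b: "tx x = b + tx cs" "P b \<noteq> 0"
      using X(2)[OF x] unfolding Q_def by (rule shift_nonzeroE)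
    have counts: "count_list x k = Poly_Mapping.lookup b k + count_list cs k" for k
      using b(1) by (metis lookup_add lookup_tx)
    have "count_list cs 0 \<noteq> 0" by (simp add: cs_def count_list_0_iff)
    hence "x \<noteq> []" using counts[of 0] by auto
    moreover have "Poly_Mapping.lookup b i \<le> d i" using d b(2) by (meson not_less)
    ultimately show ?thesis using counts[of i] by simp
  qed
  hence "finitary X" by (intro finitary_if_counts_bounded) blast+
  hence "X \<in> W" by (simp add: W_def)
  moreover have "(\<lambda>a. P a - charser X a) \<in> I0"
    using shift_congruent_I0[OF assms(1), of cs] by (simp add: X(1) Q_def)
  ultimately show ?thesis by blast
qed

theorem lemma1p11:
  shows "(\<forall>P \<in> Rplus. \<exists>X \<in> W. (\<lambda>a. P a - charser X a) \<in> I0) \<and>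
         (\<forall>S \<in> R. \<exists>X \<in> W. \<exists>Y \<in> W. \<exists>S0 \<in> I0.
              S = (\<lambda>a. charser X a - charser Y a + S0 a))"
proof (intro conjI ballI)
  fix P assume "P \<in> Rplus"
  thus "\<exists>X \<in> W. (\<lambda>a. P a - charser X a) \<in> I0"
    by (intro nonneg_series_congruent_charser) (auto simp: Rplus_def)
next
  fix S assume S: "S \<in> R"
  obtain X where X: "X \<in> W" "(\<lambda>a. max (S a) 0 - charser X a) \<in> I0"
    using nonneg_series_congruent_charser[OF R_pos_part[OF S]] by auto
  obtain Y where Y: "Y \<in> W" "(\<lambda>a. max (- S a) 0 - charser Y a) \<in> I0"
    using nonneg_series_congruent_charser[OF R_pos_part[OF R_uminus[OF S]]] by auto
  define S0 where "S0 = (\<lambda>a. (max (S a) 0 - charser X a) + - (max (- S a) 0 - charser Y a))"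
  have "S0 \<in> I0" unfolding S0_def using X(2) Y(2) by (intro I0_add I0_uminus)
  moreover have "S = (\<lambda>a. charser X a - charser Y a + S0 a)" by (auto simp: S0_def fun_eq_iff)
  ultimately show "\<exists>X \<in> W. \<exists>Y \<in> W. \<exists>S0 \<in> I0. S = (\<lambda>a. charser X a - charser Y a + S0 a)"
    using X(1) Y(1) by blast
qed

end
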